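(* Let $N\ge3$, $1<k<N-1$ and $0<p<\frac{N-1}{k-1}$. Define $\gamma_0=k-1$ and $\gamma_{n+1}=p\gamma_n+k-N$ for $n\ge0$. Then: (i) $(\gamma_n)_{n\ge0}$ is decreasing, and $\lim_{n\to\infty}\gamma_n=\frac{N-k}{p-1}$ if $0<p<1$, while $\lim_{n\to\infty}\gamma_n=-\infty$ if $1\le p<\frac{N-1}{k-1}$. (ii) Let $c>0$ and let $v:\mathbb R^{N-1}\to[0,\infty]$ be measurable with $0<v<\infty$ a.e. and $v(x')\ge c\int_{\mathbb R^{N-1}}\frac{v(y')^p}{|x'-y'|^{k-1}}dy'$ for a.e. $x'\in\mathbb R^{N-1}$. Then for every $n\ge0$ with $\gamma_n>0$ there exists $C_n>0$ such that $v(x')\ge C_n|x'|^{-\gamma_n}$ for a.e. $x'\in\mathbb R^{N-1}$ with $|x'|>1$. *)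

theory Defs
  imports "HOL-Analysis.Analysis"
begin

fun gam :: "real \<Rightarrow> real \<Rightarrow> real \<Rightarrow> nat \<Rightarrow> real" where
  "gam N k p 0 = k - 1"
| "gam N k p (Suc n) = p * gam N k p n + k - N"

definition ennpowr :: "ennreal \<Rightarrow> real \<Rightarrow> ennreal" where
  "ennpowr x p = (if x = \<infinity> then \<infinity> else ennreal (enn2real x powr p))"

end

theory Submission
  imports Defs "HOL-Real_Asymp.Real_Asymp"
begin

(* The recursion for gamma is affine with slope p, so its successive differences are
   p^n (gamma_1 - gamma_0) with gamma_1 < gamma_0 precisely because p (k - 1) < N - 1; this
   gives monotonicity and both limits. For part (ii), a positive supersolution v of
   v >= c riesz_potential (k - 1) (v^p) is bootstrapped: integrating v^p over the unit ball gives
   v(x) >~ |x|^{-(k-1)}, and if v(y) >~ |y|^{-gamma} for |y| > 1 then integrating v^p over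
   the ball of radius |x|/2 around 2x, whose volume is ~ |x|^{N-1} and on which
   |y| ~ |x - y| ~ |x|, gives v(x) >~ |x|^{-(p gamma + k - 1 - (N - 1))}. *)

lemma gam_Suc_diff:
  "gam N k p (Suc n) - gam N k p n = p ^ n * (gam N k p 1 - gam N k p 0)"
proof (induction n)
  case (Suc n)
  have "gam N k p (Suc (Suc n)) - gam N k p (Suc n) = p * (gam N k p (Suc n) - gam N k p n)"
    by (simp add: algebra_simps)
  then show ?case
    using Suc by simp
qed simp

lemma gam_minus_fixpoint:
  assumes "p \<noteq> 1"
  shows "gam N k p n - (N - k) / (p - 1) = p ^ n * (gam N k p 0 - (N - k) / (p - 1))"
proof (induction n)
  case (Suc n)
  have "gam N k p (Suc n) - (N - k) / (p - 1) = p * (gam N k p n - (N - k) / (p - 1))"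
    using assms by (simp add: field_simps)
  then show ?case
    using Suc by simp
qed simp

lemma gam_strict_dec:
  assumes "0 < p" "gam N k p 1 < gam N k p 0"
  shows "gam N k p (Suc n) < gam N k p n"
proof -
  have "p ^ n * (gam N k p 1 - gam N k p 0) < 0"
    using assms by (intro mult_pos_neg) auto
  then show ?thesis
    using gam_Suc_diff[of N k p n] by linarith
qed

lemma gam_tendsto_fixpoint:
  assumes "\<bar>p\<bar> < 1"
  shows "gam N k p \<longlonglongrightarrow> (N - k) / (p - 1)"
proof -
  have "(\<lambda>n. p ^ n * (gam N k p 0 - (N - k) / (p - 1))) \<longlonglongrightarrow> 0"
    using assms by (intro tendsto_mult_left_zero LIMSEQ_power_zero) auto
  then have "(\<lambda>n. gam N k p n - (N - k) / (p - 1)) \<longlonglongrightarrow> 0"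
    using assms gam_minus_fixpoint[of p N k] by simp
  then show ?thesis
    by (simp add: LIM_zero_iff)
qed

lemma gam_tendsto_at_bot:
  assumes "1 \<le> p" "gam N k p 1 < gam N k p 0"
  shows "filterlim (gam N k p) at_bot sequentially"
proof -
  define d where "d = gam N k p 0 - gam N k p 1"
  have d: "0 < d"
    using assms by (simp add: d_def)
  have linear_bound: "gam N k p n \<le> gam N k p 0 - real n * d" for n
  proof (induction n)
    case (Suc n)
    have "1 * d \<le> p ^ n * d"
      using assms d by (intro mult_right_mono one_le_power) auto
    then have "gam N k p (Suc n) \<le> gam N k p n - d"
      using gam_Suc_diff[of N k p n] by (simp add: d_def algebra_simps)
    then show ?case
      using Suc by (simp add: algebra_simps)
  qed simp
  have "filterlim (\<lambda>n. gam N k p 0 - real n * d) at_bot sequentially"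
    using d by real_asymp
  then show ?thesis
    by (rule filterlim_at_bot_mono) (use linear_bound in auto)
qed

lemma ennpowr_ge_powr:
  assumes "0 \<le> a" "ennreal a \<le> x" "0 \<le> p"
  shows "ennreal (a powr p) \<le> ennpowr x p"
proof (cases "x = \<infinity>")
  case False
  then have "a \<le> enn2real x"
    using assms enn2real_mono[OF assms(2)] by (simp add: top.not_eq_extremum)
  then show ?thesis
    using False assms by (simp add: ennpowr_def powr_mono2)
qed (simp add: ennpowr_def)

lemma ennpowr_pos:
  assumes "0 < x"
  shows "0 < ennpowr x p"
proof (cases "x = \<infinity>")
  case False
  then have "0 < enn2real x"
    using assms by (simp add: enn2real_positive_iff top.not_eq_extremum)
  then show ?thesis
    using False by (simp add: ennpowr_def)
qed (simp add: ennpowr_def)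

lemma borel_measurable_ennpowr [measurable]:
  assumes [measurable]: "f \<in> borel_measurable M"
  shows "(\<lambda>x. ennpowr (f x) p) \<in> borel_measurable M"
  unfolding ennpowr_def by measurable

lemma ennpowr_lower_bound_AE:
  assumes "AE y in M. P y \<longrightarrow> ennreal (C * r y powr - G) \<le> v y"
    and "0 < C" "0 \<le> p"
  shows "AE y in M. P y \<longrightarrow> ennreal (C powr p * r y powr - (p * G)) \<le> ennpowr (v y) p"
  using assms(1)
proof eventually_elim
  case (elim y)
  have "(C * r y powr - G) powr p = C powr p * r y powr - (p * G)"
    using assms by (simp add: powr_mult powr_powr mult.commute)
  then show ?case
    using elim assms ennpowr_ge_powr[of "C * r y powr - G" "v y" p] by simp
qed

lemma mult_ennreal_inverse_le_divide:
  fixes e :: ennreal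
  assumes "0 < d" "d \<le> D"
  shows "e * ennreal (1 / D) \<le> e / ennreal d"
proof -
  have "ennreal (1 / D) \<le> ennreal (1 / d)"
    using assms by (intro ennreal_leI) (simp add: frac_le)
  moreover have "e / ennreal d = e * ennreal (1 / d)"
    using assms unfolding divide_ennreal_def by (simp add: inverse_ennreal divide_inverse)
  ultimately show ?thesis
    by (simp add: mult_left_mono)
qed

lemma set_nn_integral_pos_AE:
  assumes [measurable]: "f \<in> borel_measurable M" "B \<in> sets M"
    and "AE x in M. 0 < f x" "0 < emeasure M B"
  shows "0 < (\<integral>\<^sup>+x\<in>B. f x \<partial>M)"
proof (rule ccontr)
  assume "\<not> 0 < (\<integral>\<^sup>+x\<in>B. f x \<partial>M)"
  then have "(\<integral>\<^sup>+x\<in>B. f x \<partial>M) = 0"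
    by (simp add: zero_less_iff_neq_zero)
  then have "AE x in M. f x * indicator B x = 0"
    by (simp add: nn_integral_0_iff_AE)
  then have "AE x in M. x \<notin> B"
    using assms(3) by eventually_elim (auto split: split_indicator)
  then have "emeasure M {x \<in> space M. x \<in> B} = 0"
    by (rule emeasure_eq_0_AE)
  moreover have "{x \<in> space M. x \<in> B} = B"
    using sets.sets_into_space[OF assms(2)] by blast
  ultimately show False
    using assms(4) by simp
qed

(* The kernel exponent s is d - alpha in the usual notation I_alpha for Riesz potentials on R^d. *)
definition riesz_potential :: "real \<Rightarrow> ('a::euclidean_space \<Rightarrow> ennreal) \<Rightarrow> 'a \<Rightarrow> ennreal" where
  "riesz_potential s f x = (\<integral>\<^sup>+ y. f y / ennreal (norm (x - y) powr s) \<partial>lborel)"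

lemma riesz_potential_ge_set_integral:
  fixes f :: "'a::euclidean_space \<Rightarrow> ennreal"
  assumes [measurable]: "f \<in> borel_measurable lborel" "B \<in> sets lborel"
    and "0 \<le> s" and "\<And>y. y \<in> B \<Longrightarrow> 0 < norm (x - y) \<and> norm (x - y) \<le> R"
  shows "(\<integral>\<^sup>+y\<in>B. f y \<partial>lborel) * ennreal (R powr - s) \<le> riesz_potential s f x"
proof -
  have "(\<integral>\<^sup>+y\<in>B. f y \<partial>lborel) * ennreal (R powr - s)
      = (\<integral>\<^sup>+y. f y * indicator B y * ennreal (R powr - s) \<partial>lborel)"
    by (subst nn_integral_multc) simp_all
  also have "\<dots> \<le> riesz_potential s f x"
    unfolding riesz_potential_def
  proof (rule nn_integral_mono)
    fix y
    show "f y * indicator B y * ennreal (R powr - s) \<le> f y / ennreal (norm (x - y) powr s)"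
    proof (cases "y \<in> B")
      case True
      then have "0 < norm (x - y) powr s" "norm (x - y) powr s \<le> R powr s"
        using assms(3,4) by (auto intro: powr_mono2)
      then show ?thesis
        using True by (simp add: mult_ennreal_inverse_le_divide powr_minus_divide)
    qed simp
  qed
  finally show ?thesis .
qed

lemma riesz_potential_decay_base:
  fixes f :: "'a::euclidean_space \<Rightarrow> ennreal"
  assumes [measurable]: "f \<in> borel_measurable lborel"
    and "AE y in lborel. 0 < f y" "0 \<le> s"
  shows "\<exists>a>0. \<forall>x. 1 < norm x \<longrightarrow> ennreal (a * norm x powr - s) \<le> riesz_potential s f x"
proof -
  define I where "I = (\<integral>\<^sup>+y\<in>ball 0 1. f y \<partial>lborel)"
  have "0 < I"
    unfolding I_def using assms by (intro set_nn_integral_pos_AE) (auto simp: emeasure_ball)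
  obtain a where a: "0 < a" "ennreal a \<le> I"
  proof (cases "I = \<infinity>")
    case False
    then show ?thesis
      using that[of "enn2real I"] \<open>0 < I\<close>
      by (simp add: enn2real_positive_iff top.not_eq_extremum)
  qed (use that[of 1] in simp)
  show ?thesis
  proof (intro exI[of _ "a * 2 powr - s"] conjI allI impI)
    fix x :: 'a
    assume x: "1 < norm x"
    have "0 < norm (x - y) \<and> norm (x - y) \<le> 2 * norm x" if "y \<in> ball 0 1" for y
    proof -
      have "norm y < 1"
        using that by simp
      then show ?thesis
        using x norm_triangle_ineq4[of x y] norm_triangle_ineq2[of x y] by linarith
    qed
    then have "I * ennreal ((2 * norm x) powr - s) \<le> riesz_potential s f x"
      unfolding I_def using assms by (intro riesz_potential_ge_set_integral) auto
    moreover have "ennreal (a * 2 powr - s * norm x powr - s) \<le> I * ennreal ((2 * norm x) powr - s)"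
      using a by (simp add: powr_mult ennreal_mult' mult_right_mono mult.assoc)
    ultimately show "ennreal (a * 2 powr - s * norm x powr - s) \<le> riesz_potential s f x"
      by order
  qed (use a in simp)
qed

lemma norm_bounds_in_ball_double:
  fixes x y :: "'a::real_normed_vector"
  assumes "y \<in> ball (2 *\<^sub>R x) (norm x / 2)"
  shows "3 / 2 * norm x \<le> norm y" "norm y \<le> 5 / 2 * norm x"
    and "norm x / 2 \<le> norm (x - y)" "norm (x - y) \<le> 3 / 2 * norm x"
proof -
  have d: "norm (2 *\<^sub>R x - y) < norm x / 2"
    using assms by (simp add: dist_norm)
  have "norm (2 *\<^sub>R x) \<le> norm y + norm (2 *\<^sub>R x - y)"
    by (rule norm_triangle_sub)
  then show "3 / 2 * norm x \<le> norm y"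
    using d by simp
  have "norm y \<le> norm (2 *\<^sub>R x) + norm (2 *\<^sub>R x - y)"
    using norm_triangle_ineq4[of "2 *\<^sub>R x" "2 *\<^sub>R x - y"] by simp
  then show "norm y \<le> 5 / 2 * norm x"
    using d by simp
  have "norm x \<le> norm (2 *\<^sub>R x - y) + norm (x - y)"
    using norm_triangle_ineq4[of "2 *\<^sub>R x - y" "x - y"] by (simp add: algebra_simps scaleR_2)
  then show "norm x / 2 \<le> norm (x - y)"
    using d by simp
  have "norm (x - y) \<le> norm (2 *\<^sub>R x - y) + norm x"
    using norm_triangle_ineq4[of "2 *\<^sub>R x - y" x] by (simp add: algebra_simps scaleR_2)
  then show "norm (x - y) \<le> 3 / 2 * norm x"
    using d by simp
qed

lemma set_nn_integral_ball_double_ge: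
  fixes f :: "'a::euclidean_space \<Rightarrow> ennreal"
  assumes "0 \<le> G" "0 < a" "1 < norm x"
    and decay: "AE y in lborel. 1 < norm y \<longrightarrow> ennreal (a * norm y powr - G) \<le> f y"
  shows "ennreal (a * (5 / 2 * norm x) powr - G) * ennreal (unit_ball_vol DIM('a) * (norm x / 2) ^ DIM('a))
    \<le> (\<integral>\<^sup>+y\<in>ball (2 *\<^sub>R x) (norm x / 2). f y \<partial>lborel)"
proof -
  define B where "B = ball (2 *\<^sub>R x) (norm x / 2)"
  define A where "A = a * (5 / 2 * norm x) powr - G"
  have "AE y in lborel. ennreal A * indicator B y \<le> f y * indicator B y"
    using decay
  proof eventually_elim
    case (elim y)
    show ?case
    proof (cases "y \<in> B")
      case True
      note bounds = norm_bounds_in_ball_double[OF True[unfolded B_def]]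
      have "A \<le> a * norm y powr - G"
        unfolding A_def using bounds assms(1-3) by (intro mult_left_mono powr_mono2') auto
      then have "ennreal A \<le> ennreal (a * norm y powr - G)"
        by (rule ennreal_leI)
      also have "\<dots> \<le> f y"
        using elim bounds assms(3) by simp
      finally show ?thesis
        using True by simp
    qed simp
  qed
  then have "ennreal A * emeasure lborel B \<le> (\<integral>\<^sup>+y\<in>B. f y \<partial>lborel)"
    by (subst nn_integral_cmult_indicator[symmetric]) (auto simp: B_def intro: nn_integral_mono_AE)
  moreover have "emeasure lborel B = ennreal (unit_ball_vol DIM('a) * (norm x / 2) ^ DIM('a))"
    by (simp add: B_def emeasure_ball)
  ultimately show ?thesis
    by (simp add: A_def B_def)
qed

lemma riesz_potential_decay_step:
  fixes f :: "'a::euclidean_space \<Rightarrow> ennreal"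
  assumes [measurable]: "f \<in> borel_measurable lborel"
    and "0 \<le> s" "0 \<le> G" "0 < a"
    and decay: "AE y in lborel. 1 < norm y \<longrightarrow> ennreal (a * norm y powr - G) \<le> f y"
  shows "\<exists>b>0. \<forall>x. 1 < norm x \<longrightarrow>
           ennreal (b * norm x powr - (G + s - DIM('a))) \<le> riesz_potential s f x"
proof -
  define w where "w = unit_ball_vol DIM('a)"
  define b where "b = a * (5 / 2) powr - G * w * (1 / 2) ^ DIM('a) * (3 / 2) powr - s"
  have "0 < w"
    by (simp add: w_def)
  show ?thesis
  proof (intro exI[of _ b] conjI allI impI)
    fix x :: 'a
    assume x: "1 < norm x"
    define r where "r = norm x"
    define B where "B = ball (2 *\<^sub>R x) (r / 2)"
    have "0 < r"
      using x unfolding r_def by linarith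
    have mass: "ennreal (a * (5 / 2 * r) powr - G) * ennreal (w * (r / 2) ^ DIM('a))
        \<le> (\<integral>\<^sup>+y\<in>B. f y \<partial>lborel)"
      unfolding w_def r_def B_def using assms(3,4) x decay by (rule set_nn_integral_ball_double_ge)
    have "0 < norm (x - y) \<and> norm (x - y) \<le> 3 / 2 * r" if "y \<in> B" for y
      using norm_bounds_in_ball_double(3,4)[OF that[unfolded B_def r_def]] x
      unfolding r_def by linarith
    then have kernel: "(\<integral>\<^sup>+y\<in>B. f y \<partial>lborel) * ennreal ((3 / 2 * r) powr - s) \<le> riesz_potential s f x"
      using assms(2) by (intro riesz_potential_ge_set_integral) (auto simp: B_def)
    have "r powr - (G + s - DIM('a)) = r powr - G * r powr - s * r powr DIM('a)"
      unfolding powr_add [symmetric] by (simp add: algebra_simps)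
    moreover have "(5 / 2 * r) powr - G = (5 / 2) powr - G * r powr - G"
      and "(3 / 2 * r) powr - s = (3 / 2) powr - s * r powr - s"
      using \<open>0 < r\<close> by (intro powr_mult; simp)+
    ultimately have "b * r powr - (G + s - DIM('a))
        = a * (5 / 2 * r) powr - G * (w * (r / 2) ^ DIM('a)) * (3 / 2 * r) powr - s"
      using \<open>0 < r\<close> by (simp add: b_def powr_realpow power_divide mult_ac)
    then have "ennreal (b * norm x powr - (G + s - DIM('a)))
        = ennreal (a * (5 / 2 * r) powr - G) * ennreal (w * (r / 2) ^ DIM('a))
          * ennreal ((3 / 2 * r) powr - s)"
      using \<open>0 < w\<close> assms(4) by (simp add: r_def ennreal_mult')
    also have "\<dots> \<le> (\<integral>\<^sup>+y\<in>B. f y \<partial>lborel) * ennreal ((3 / 2 * r) powr - s)"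
      using mass by (rule mult_right_mono) simp
    also note kernel
    finally show "ennreal (b * norm x powr - (G + s - DIM('a))) \<le> riesz_potential s f x" .
  qed (use \<open>0 < w\<close> assms(4) in \<open>simp add: b_def\<close>)
qed

lemma supersolution_power_decay:
  fixes v :: "'a::euclidean_space \<Rightarrow> ennreal" and g :: "nat \<Rightarrow> real"
  assumes "0 < c" "0 \<le> s" "0 < p"
    and [measurable]: "v \<in> borel_measurable lborel"
    and pos: "AE x in lborel. 0 < v x"
    and super: "AE x in lborel. ennreal c * riesz_potential s (\<lambda>y. ennpowr (v y) p) x \<le> v x"
    and g_0: "g 0 = s" and g_Suc: "\<And>n. g (Suc n) = p * g n + s - DIM('a)" and "decseq g"
  shows "0 < g n \<Longrightarrow> \<exists>C>0. AE x in lborel. 1 < norm x \<longrightarrow> ennreal (C * norm x powr - g n) \<le> v x"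
proof -
  have from_potential: "\<exists>C>0. AE x in lborel. 1 < norm x \<longrightarrow> ennreal (C * norm x powr - G) \<le> v x"
    if potential_decay: "\<exists>b>0. \<forall>x. 1 < norm x \<longrightarrow>
          ennreal (b * norm x powr - G) \<le> riesz_potential s (\<lambda>y. ennpowr (v y) p) x" for G
  proof -
    obtain b where b: "0 < b" "\<And>x. 1 < norm x \<Longrightarrow>
        ennreal (b * norm x powr - G) \<le> riesz_potential s (\<lambda>y. ennpowr (v y) p) x"
      using potential_decay by blast
    have "AE x in lborel. 1 < norm x \<longrightarrow> ennreal (c * b * norm x powr - G) \<le> v x"
      using super
    proof eventually_elim
      case (elim x)
      show ?case
      proof
        assume "1 < norm x"
        then have "ennreal c * ennreal (b * norm x powr - G) \<le> v x"
          using elim b(2) by (meson mult_left_mono order_trans zero_le)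
        then show "ennreal (c * b * norm x powr - G) \<le> v x"
          using \<open>0 < c\<close> by (simp add: ennreal_mult' mult.assoc)
      qed
    qed
    then show ?thesis
      using \<open>0 < c\<close> \<open>0 < b\<close> by (intro exI[of _ "c * b"]) simp
  qed
  show "0 < g n \<Longrightarrow> ?thesis"
  proof (induction n)
    case 0
    have "AE y in lborel. 0 < ennpowr (v y) p"
      using pos by eventually_elim (rule ennpowr_pos)
    then show ?case
      unfolding g_0 using \<open>0 \<le> s\<close> by (intro from_potential riesz_potential_decay_base) auto
  next
    case (Suc n)
    have "0 < g n"
      using Suc.prems decseqD[OF \<open>decseq g\<close>, of n "Suc n"] by linarith
    then obtain C where "0 < C"
      and "AE y in lborel. 1 < norm y \<longrightarrow> ennreal (C * norm y powr - g n) \<le> v y"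
      using Suc.IH by blast
    then have "AE y in lborel. 1 < norm y \<longrightarrow>
        ennreal (C powr p * norm y powr - (p * g n)) \<le> ennpowr (v y) p"
      using \<open>0 < p\<close> by (intro ennpowr_lower_bound_AE) auto
    then have "\<exists>b>0. \<forall>x. 1 < norm x \<longrightarrow> ennreal (b * norm x powr - (p * g n + s - DIM('a)))
        \<le> riesz_potential s (\<lambda>y. ennpowr (v y) p) x"
      using \<open>0 < C\<close> \<open>0 < p\<close> \<open>0 < g n\<close> \<open>0 \<le> s\<close> by (intro riesz_potential_decay_step) auto
    then show ?case
      unfolding g_Suc by (rule from_potential)
  qed
qed

theorem lemma3p2:
  fixes N :: nat and k p :: real
  assumes N3: "N \<ge> 3"
    and dim: "CARD('n::finite) = N - 1"
    and k1: "1 < k" and k2: "k < real N - 1"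
    and p0: "0 < p" and p1: "p < (real N - 1) / (k - 1)"
  shows "(\<forall>n. gam (real N) k p (Suc n) < gam (real N) k p n)
    \<and> (p < 1 \<longrightarrow> (gam (real N) k p \<longlonglongrightarrow> (real N - k) / (p - 1)))
    \<and> (1 \<le> p \<longrightarrow> filterlim (gam (real N) k p) at_bot sequentially)
    \<and> (\<forall>(c::real) (v :: real^'n \<Rightarrow> ennreal).
          c > 0 \<and> v \<in> borel_measurable lborel
          \<and> (AE x in lborel. 0 < v x \<and> v x < \<infinity>)
          \<and> (AE x in lborel. v x \<ge> ennreal c *
               (\<integral>\<^sup>+ y. ennpowr (v y) p / ennreal (norm (x - y) powr (k - 1)) \<partial>lborel))
          \<longrightarrow> (\<forall>n. gam (real N) k p n > 0 \<longrightarrow>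
                (\<exists>C>0. AE x in lborel. norm x > 1 \<longrightarrow>
                    v x \<ge> ennreal (C * norm x powr (- gam (real N) k p n)))))"
proof -
  let ?g = "gam (real N) k p"
  have "p * (k - 1) < real N - 1"
    using p1 k1 by (simp add: pos_less_divide_eq)
  then have first_step: "?g 1 < ?g 0"
    by simp
  have dec: "?g (Suc n) < ?g n" for n
    using p0 first_step by (rule gam_strict_dec)
  have g_Suc: "?g (Suc n) = p * ?g n + (k - 1) - DIM(real ^ 'n)" for n
    using dim N3 by simp
  have decay: "\<exists>C>0. AE x in lborel. 1 < norm x \<longrightarrow> ennreal (C * norm x powr - ?g n) \<le> v x"
    if "0 < c" "v \<in> borel_measurable lborel" "AE x in lborel. 0 < v x \<and> v x < \<infinity>"
      and "AE x in lborel. ennreal c *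
             (\<integral>\<^sup>+ y. ennpowr (v y) p / ennreal (norm (x - y) powr (k - 1)) \<partial>lborel) \<le> v x"
      and "0 < ?g n"
    for c and v :: "real ^ 'n \<Rightarrow> ennreal" and n
    using that k1 p0 dec g_Suc
    by (intro supersolution_power_decay[of c "k - 1" p v ?g])
       (auto simp: riesz_potential_def decseq_SucI less_imp_le elim: AE_mp)
  show ?thesis
    using dec gam_tendsto_fixpoint[of p] gam_tendsto_at_bot[OF _ first_step] decay p0 by auto
qed

end
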